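(* For all integers $r \geq 3$ and $k \geq 3$, we have $s_r(K_k) \geq s_{r-1}(K_k)$.
   Context: All graphs are finite and simple. For graphs $G,H$ and an integer $r\ge 1$, write $G \rightarrow (H)_r$ if every colouring of the edges of $G$ with $r$ colours contains a monochromatic copy of $H$. A graph $G$ is $r$-Ramsey-minimal for $H$ if $G \rightarrow (H)_r$ but no proper subgraph $G'\subsetneq G$ satisfies $G' \rightarrow (H)_r$. Define $s_r(H) := \min \delta(G)$ over all graphs $G$ that are $r$-Ramsey-minimal for $H$, where $\delta$ denotes minimum degree. *)

theory Defs
  imports Main
begin

text \<open>A finite simple graph on natural-number vertices: a pair (V, E) with V finite and
E a set of 2-element subsets of V. Every finite graph is isomorphic to such a graph,
so the minimum in s_r ranges over all graphs up to isomorphism.\<close>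

type_synonym graph = "nat set \<times> nat set set"

definition verts :: "graph \<Rightarrow> nat set" where "verts G = fst G"
definition edges :: "graph \<Rightarrow> nat set set" where "edges G = snd G"

definition is_graph :: "graph \<Rightarrow> bool" where
  "is_graph G \<longleftrightarrow> finite (verts G) \<and> (\<forall>e\<in>edges G. card e = 2 \<and> e \<subseteq> verts G)"

definition subgraph :: "graph \<Rightarrow> graph \<Rightarrow> bool" where
  "subgraph G' G \<longleftrightarrow> is_graph G' \<and> verts G' \<subseteq> verts G \<and> edges G' \<subseteq> edges G"

definition degree :: "graph \<Rightarrow> nat \<Rightarrow> nat" where
  "degree G v = card {e \<in> edges G. v \<in> e}"

definition min_degree :: "graph \<Rightarrow> nat" where
  "min_degree G = Min (degree G ` verts G)"

definition complete_graph :: "nat \<Rightarrow> graph" where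
  "complete_graph k = ({0..<k}, {e. e \<subseteq> {0..<k} \<and> card e = 2})"

definition mono_copy :: "graph \<Rightarrow> graph \<Rightarrow> (nat set \<Rightarrow> nat) \<Rightarrow> nat \<Rightarrow> bool" where
  "mono_copy H G c i \<longleftrightarrow> (\<exists>f. inj_on f (verts H) \<and> f ` verts H \<subseteq> verts G \<and>
      (\<forall>e\<in>edges H. f ` e \<in> edges G \<and> c (f ` e) = i))"

definition arrows :: "graph \<Rightarrow> graph \<Rightarrow> nat \<Rightarrow> bool" where
  "arrows G H r \<longleftrightarrow> (\<forall>c. (\<forall>e\<in>edges G. c e < r) \<longrightarrow> (\<exists>i<r. mono_copy H G c i))"

definition ramsey_minimal :: "nat \<Rightarrow> graph \<Rightarrow> graph \<Rightarrow> bool" where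
  "ramsey_minimal r H G \<longleftrightarrow> is_graph G \<and> arrows G H r \<and>
     (\<forall>G'. subgraph G' G \<and> G' \<noteq> G \<longrightarrow> \<not> arrows G' H r)"

definition s_r :: "nat \<Rightarrow> graph \<Rightarrow> nat" where
  "s_r r H = (LEAST d. d \<in> min_degree ` {G. ramsey_minimal r H G})"

end

theory Submission
  imports Defs "HOL-Library.Ramsey"
begin

text \<open>Let G be r-Ramsey-minimal for H with \<delta>(G) = s_r(H), and let v be a vertex of minimum
degree. By minimality G - v has an r-colouring c without a monochromatic H. Keep all edges at v
together with the edges of G - v coloured below r - 1: this spanning subgraph arrows H with
r - 1 colours, because any (r - 1)-colouring of it extends, by c, to an r-colouring of G whose
monochromatic copy cannot have the last colour. An (r - 1)-Ramsey-minimal subgraph of it must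
use an edge at v, since otherwise c itself would colour it with r - 1 colours; hence its minimum
degree is at most deg v = s_r(H).\<close>

definition del_vertex :: "graph \<Rightarrow> nat \<Rightarrow> graph" where
  "del_vertex G v = (verts G - {v}, {e \<in> edges G. v \<notin> e})"

definition spanning_subgraph :: "graph \<Rightarrow> (nat set \<Rightarrow> bool) \<Rightarrow> graph" where
  "spanning_subgraph G P = (verts G, {e \<in> edges G. P e})"

definition no_isolated_vertices :: "graph \<Rightarrow> bool" where
  "no_isolated_vertices H \<longleftrightarrow> (\<forall>x \<in> verts H. \<exists>e \<in> edges H. x \<in> e)"

lemma is_graph_finite_edges: "is_graph G \<Longrightarrow> finite (edges G)"
  unfolding is_graph_def by (meson Pow_iff finite_Pow_iff finite_subset subsetI)

lemma edges_del_vertex [simp]: "e \<in> edges (del_vertex G v) \<longleftrightarrow> e \<in> edges G \<and> v \<notin> e"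
  by (simp add: del_vertex_def edges_def)

lemma is_graph_del_vertex: "is_graph G \<Longrightarrow> is_graph (del_vertex G v)"
  unfolding is_graph_def del_vertex_def verts_def edges_def by auto

lemma subgraph_del_vertex: "is_graph G \<Longrightarrow> subgraph (del_vertex G v) G"
  unfolding subgraph_def using is_graph_del_vertex
  by (auto simp: del_vertex_def verts_def edges_def)

lemma del_vertex_neq: "v \<in> verts G \<Longrightarrow> del_vertex G v \<noteq> G"
  by (metis Diff_iff del_vertex_def fst_conv insertI1 verts_def)

lemma edges_spanning_subgraph [simp]:
  "e \<in> edges (spanning_subgraph G P) \<longleftrightarrow> e \<in> edges G \<and> P e"
  by (simp add: spanning_subgraph_def edges_def)

lemma is_graph_spanning_subgraph: "is_graph G \<Longrightarrow> is_graph (spanning_subgraph G P)"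
  unfolding is_graph_def spanning_subgraph_def verts_def edges_def by auto

lemma subgraph_spanning_subgraph: "is_graph G \<Longrightarrow> subgraph (spanning_subgraph G P) G"
  unfolding subgraph_def using is_graph_spanning_subgraph
  by (auto simp: spanning_subgraph_def verts_def edges_def)

lemma subgraph_refl: "is_graph G \<Longrightarrow> subgraph G G"
  by (simp add: subgraph_def)

lemma subgraph_trans: "subgraph A B \<Longrightarrow> subgraph B C \<Longrightarrow> subgraph A C"
  unfolding subgraph_def by auto

lemma degree_subgraph_le:
  assumes "subgraph G' G" "is_graph G"
  shows "degree G' v \<le> degree G v"
  unfolding degree_def using assms is_graph_finite_edges
  by (intro card_mono) (auto simp: subgraph_def)

lemma min_degree_le_degree: "is_graph G \<Longrightarrow> v \<in> verts G \<Longrightarrow> min_degree G \<le> degree G v"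
  unfolding min_degree_def is_graph_def by simp

lemma min_degree_attained:
  assumes "is_graph G" "verts G \<noteq> {}"
  obtains v where "v \<in> verts G" "degree G v = min_degree G"
proof -
  have "min_degree G \<in> degree G ` verts G"
    unfolding min_degree_def using assms by (intro Min_in) (auto simp: is_graph_def)
  then show ?thesis using that by auto
qed

lemma no_isolated_vertices_complete_graph:
  assumes "k \<ge> 2"
  shows "no_isolated_vertices (complete_graph k)"
  unfolding no_isolated_vertices_def
proof
  fix x assume "x \<in> verts (complete_graph k)"
  then have x: "x < k" by (simp add: complete_graph_def verts_def)
  define y where "y = (if x = 0 then 1 else (0::nat))"
  have "x \<noteq> y" "y < k" using assms by (auto simp: y_def)
  then have "{x, y} \<in> edges (complete_graph k)"
    using x by (simp add: complete_graph_def edges_def)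
  then show "\<exists>e \<in> edges (complete_graph k). x \<in> e" by blast
qed

lemma edges_complete_graph_nonempty: "k \<ge> 2 \<Longrightarrow> edges (complete_graph k) \<noteq> {}"
proof -
  assume "k \<ge> 2"
  then have "{0, 1} \<in> edges (complete_graph k)" by (auto simp: complete_graph_def edges_def)
  then show ?thesis by blast
qed

text \<open>A monochromatic copy is determined by its edges; the absence of isolated vertices
in H guarantees that its vertices follow them into G2.\<close>

lemma mono_copy_transfer:
  assumes "mono_copy H G c i" "no_isolated_vertices H" "is_graph G2"
    and "\<forall>e \<in> edges G. c e = i \<longrightarrow> e \<in> edges G2 \<and> c2 e = j"
  shows "mono_copy H G2 c2 j"
proof -
  from assms(1) obtain f where inj: "inj_on f (verts H)"
    and f: "\<forall>e \<in> edges H. f ` e \<in> edges G \<and> c (f ` e) = i"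
    unfolding mono_copy_def by blast
  have E: "\<forall>e \<in> edges H. f ` e \<in> edges G2 \<and> c2 (f ` e) = j"
    using f assms(4) by blast
  have "f ` verts H \<subseteq> verts G2"
  proof
    fix y assume "y \<in> f ` verts H"
    then obtain x e where "y = f x" "e \<in> edges H" "x \<in> e"
      using assms(2) unfolding no_isolated_vertices_def by blast
    then show "y \<in> verts G2" using E assms(3) unfolding is_graph_def by blast
  qed
  then show ?thesis unfolding mono_copy_def using inj E by blast
qed

lemma arrows_edges_nonempty:
  assumes "arrows G H r" "edges H \<noteq> {}"
  shows "edges G \<noteq> {}"
proof
  assume G: "edges G = {}"
  then obtain i where "mono_copy H G (\<lambda>_. 0) i" using assms(1) unfolding arrows_def by blast
  then show False using G assms(2) unfolding mono_copy_def by blast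
qed

lemma ex_ramsey_minimal_subgraph:
  "is_graph G \<Longrightarrow> arrows G H r \<Longrightarrow> \<exists>G'. subgraph G' G \<and> ramsey_minimal r H G'"
proof (induction "card (verts G) + card (edges G)" arbitrary: G rule: less_induct)
  case less
  show ?case
  proof (cases "ramsey_minimal r H G")
    case True
    then show ?thesis using subgraph_refl less.prems by blast
  next
    case False
    then obtain G' where G': "subgraph G' G" "G' \<noteq> G" "arrows G' H r"
      using less.prems unfolding ramsey_minimal_def by blast
    have fin: "finite (verts G)" "finite (edges G)"
      using less.prems is_graph_finite_edges by (auto simp: is_graph_def)
    have sub: "verts G' \<subseteq> verts G" "edges G' \<subseteq> edges G" using G'(1) by (auto simp: subgraph_def)
    have "verts G' \<subset> verts G \<or> edges G' \<subset> edges G"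
      using G'(2) sub unfolding verts_def edges_def by (metis prod_eq_iff psubsetI)
    then have "card (verts G') + card (edges G') < card (verts G) + card (edges G)"
      using fin sub by (meson add_le_less_mono add_less_le_mono card_mono psubset_card_mono)
    moreover have "is_graph G'" using G'(1) by (simp add: subgraph_def)
    ultimately obtain G'' where "subgraph G'' G'" "ramsey_minimal r H G''"
      using less.hyps G'(3) by blast
    then show ?thesis using G'(1) subgraph_trans by blast
  qed
qed

lemma arrows_complete_graph_ex: "\<exists>N. arrows (complete_graph N) (complete_graph k) r"
proof -
  obtain N :: nat where N: "partn_lst {..<N} (replicate r k) 2"
    using ramsey_full[of "replicate r k" 2] by blast
  have "arrows (complete_graph N) (complete_graph k) r"
    unfolding arrows_def
  proof (intro allI impI)
    fix c assume "\<forall>e \<in> edges (complete_graph N). c e < r"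
    then have "c \<in> nsets {..<N} 2 \<rightarrow> {..<r}"
      unfolding complete_graph_def edges_def nsets_def by (auto simp: atLeast0LessThan)
    then obtain i Hs where "i < length (replicate r k)" "Hs \<in> nsets {..<N} (replicate r k ! i)"
        "c ` nsets Hs 2 \<subseteq> {i}"
      by (rule partn_lstE[OF N _ length_replicate])
    then have i: "i < r" "c ` nsets Hs 2 \<subseteq> {i}" and Hs: "finite Hs" "card Hs = k" "Hs \<subseteq> {..<N}"
      by (auto simp: nsets_def)
    obtain h where h: "bij_betw h {0..<k} Hs" using ex_bij_betw_nat_finite[OF Hs(1)] Hs(2) by auto
    have "mono_copy (complete_graph k) (complete_graph N) c i"
      unfolding mono_copy_def
    proof (intro exI[of _ h] conjI ballI)
      show "inj_on h (verts (complete_graph k))" "h ` verts (complete_graph k) \<subseteq> verts (complete_graph N)"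
        using h Hs by (auto simp: bij_betw_def complete_graph_def verts_def)
      fix e assume "e \<in> edges (complete_graph k)"
      then have e: "e \<subseteq> {0..<k}" "card e = 2" by (auto simp: complete_graph_def edges_def)
      then have "card (h ` e) = 2" using h by (metis bij_betw_def card_image inj_on_subset)
      moreover have "h ` e \<subseteq> Hs" using h e by (auto simp: bij_betw_def)
      ultimately have "h ` e \<in> nsets Hs 2" "h ` e \<subseteq> {..<N}"
        using Hs by (auto simp: nsets_def intro: finite_subset)
      then show "h ` e \<in> edges (complete_graph N)" "c (h ` e) = i"
        using i(2) by (auto simp: complete_graph_def edges_def atLeast0LessThan nsets_def)
    qed
    then show "\<exists>i<r. mono_copy (complete_graph k) (complete_graph N) c i" using i by auto
  qed
  then show ?thesis ..
qed

lemma ex_ramsey_minimal_complete_graph: "\<exists>G. ramsey_minimal r (complete_graph k) G"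
proof -
  obtain N where "arrows (complete_graph N) (complete_graph k) r"
    using arrows_complete_graph_ex by blast
  moreover have "is_graph (complete_graph N)"
    unfolding is_graph_def complete_graph_def verts_def edges_def by auto
  ultimately show ?thesis using ex_ramsey_minimal_subgraph by blast
qed

text \<open>The last colour r - 1 is taken from c, which avoids v, so it carries no monochromatic
copy; the remaining colours are exactly those of the spanning subgraph.\<close>

lemma arrows_recolour:
  assumes G: "is_graph G" "arrows G H r" and H: "no_isolated_vertices H"
    and c: "\<forall>e \<in> edges (del_vertex G v). c e < r"
      "\<forall>i<r. \<not> mono_copy H (del_vertex G v) c i"
  shows "arrows (spanning_subgraph G (\<lambda>e. v \<in> e \<or> c e < r - 1)) H (r - 1)"
  (is "arrows ?S H (r - 1)")
  unfolding arrows_def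
proof (intro allI impI)
  fix c' assume "\<forall>e \<in> edges ?S. c' e < r - 1"
  then have c': "\<forall>e \<in> edges G. v \<in> e \<or> c e < r - 1 \<longrightarrow> c' e < r - 1"
    by simp
  define c'' where "c'' e = (if e \<in> edges ?S then c' e else c e)" for e
  have "c'' e < r" if "e \<in> edges G" for e
  proof (cases "e \<in> edges ?S")
    case True
    then show ?thesis using c' that by (auto simp: c''_def)
  next
    case False
    then show ?thesis using c(1) that by (simp add: c''_def)
  qed
  then obtain i where i: "i < r" "mono_copy H G c'' i"
    using G(2) unfolding arrows_def by blast
  show "\<exists>i<r - 1. mono_copy H ?S c' i"
  proof (cases "i = r - 1")
    case True
    have "\<forall>e \<in> edges G. c'' e = i \<longrightarrow> e \<in> edges (del_vertex G v) \<and> c e = i"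
      using c' True by (auto simp: c''_def)
    then have "mono_copy H (del_vertex G v) c i"
      using mono_copy_transfer[OF i(2) H is_graph_del_vertex[OF G(1)]] by blast
    then show ?thesis using c(2) i(1) by blast
  next
    case False
    then have "i < r - 1" using i(1) by linarith
    moreover have "\<forall>e \<in> edges G. c'' e = i \<longrightarrow> e \<in> edges ?S \<and> c' e = i"
      using \<open>i < r - 1\<close> by (auto simp: c''_def)
    then have "mono_copy H ?S c' i"
      using mono_copy_transfer[OF i(2) H is_graph_spanning_subgraph[OF G(1)]] by blast
    ultimately show ?thesis by blast
  qed
qed

lemma arrows_subgraph_edge_at_vertex:
  assumes G: "is_graph G" and H: "no_isolated_vertices H"
    and c: "\<forall>i<r. \<not> mono_copy H (del_vertex G v) c i"
    and G': "subgraph G' (spanning_subgraph G (\<lambda>e. v \<in> e \<or> c e < r - 1))" "arrows G' H (r - 1)"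
  shows "\<exists>e \<in> edges G'. v \<in> e"
proof (rule ccontr)
  assume no_edge: "\<not> (\<exists>e \<in> edges G'. v \<in> e)"
  have in_D: "e \<in> edges (del_vertex G v) \<and> c e < r - 1" if "e \<in> edges G'" for e
    using G'(1) no_edge that unfolding subgraph_def by auto
  then obtain i where i: "i < r - 1" "mono_copy H G' c i"
    using G'(2) unfolding arrows_def by blast
  have "mono_copy H (del_vertex G v) c i"
    using in_D by (intro mono_copy_transfer[OF i(2) H is_graph_del_vertex[OF G]]) blast
  then show False using c i(1) by simp
qed

lemma ramsey_minimal_degree_step:
  assumes G: "ramsey_minimal r H G" and H: "no_isolated_vertices H" and v: "v \<in> verts G"
  obtains G' where "ramsey_minimal (r - 1) H G'" "min_degree G' \<le> degree G v"
proof -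
  have gG: "is_graph G" and aG: "arrows G H r" using G by (auto simp: ramsey_minimal_def)
  have "\<not> arrows (del_vertex G v) H r"
    using G subgraph_del_vertex[OF gG] del_vertex_neq[OF v] unfolding ramsey_minimal_def by blast
  then obtain c where c: "\<forall>e \<in> edges (del_vertex G v). c e < r"
      "\<forall>i<r. \<not> mono_copy H (del_vertex G v) c i"
    unfolding arrows_def by blast
  let ?S = "spanning_subgraph G (\<lambda>e. v \<in> e \<or> c e < r - 1)"
  obtain G' where G': "subgraph G' ?S" "ramsey_minimal (r - 1) H G'"
    using ex_ramsey_minimal_subgraph[OF is_graph_spanning_subgraph[OF gG] arrows_recolour[OF gG aG H c]]
    by blast
  have gG': "is_graph G'" and aG': "arrows G' H (r - 1)" using G'(2) by (auto simp: ramsey_minimal_def)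
  obtain e where "e \<in> edges G'" "v \<in> e"
    using arrows_subgraph_edge_at_vertex[OF gG H c(2) G'(1) aG'] by blast
  then have "v \<in> verts G'" using gG' by (auto simp: is_graph_def)
  then have "min_degree G' \<le> degree G' v" by (rule min_degree_le_degree[OF gG'])
  also have "\<dots> \<le> degree G v"
    using subgraph_trans[OF G'(1) subgraph_spanning_subgraph[OF gG]] gG by (rule degree_subgraph_le)
  finally show ?thesis by (rule that[OF G'(2)])
qed

lemma s_r_le_min_degree: "ramsey_minimal r H G \<Longrightarrow> s_r r H \<le> min_degree G"
  unfolding s_r_def by (intro Least_le) blast

lemma s_r_attained:
  assumes "ramsey_minimal r H G0"
  obtains G where "ramsey_minimal r H G" "min_degree G = s_r r H"
proof -
  have "\<exists>d. d \<in> min_degree ` {G. ramsey_minimal r H G}" using assms by blast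
  then have "s_r r H \<in> min_degree ` {G. ramsey_minimal r H G}"
    unfolding s_r_def by (rule LeastI_ex)
  then obtain G where "ramsey_minimal r H G" "s_r r H = min_degree G" by blast
  then show ?thesis using that by simp
qed

theorem mainTheorem10:
  fixes r k :: nat
  assumes "r \<ge> 3" and "k \<ge> 3"
  shows "s_r r (complete_graph k) \<ge> s_r (r - 1) (complete_graph k)"
proof -
  let ?K = "complete_graph k"
  obtain G0 where "ramsey_minimal r ?K G0" using ex_ramsey_minimal_complete_graph ..
  then obtain G where G: "ramsey_minimal r ?K G" "min_degree G = s_r r ?K" by (rule s_r_attained)
  then have gG: "is_graph G" and aG: "arrows G ?K r" by (simp_all add: ramsey_minimal_def)
  have "edges G \<noteq> {}"
    using arrows_edges_nonempty[OF aG edges_complete_graph_nonempty] assms(2) by simp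
  then have "verts G \<noteq> {}" using gG unfolding is_graph_def by fastforce
  then obtain v where v: "v \<in> verts G" "degree G v = min_degree G"
    using min_degree_attained[OF gG] by blast
  have "no_isolated_vertices ?K" using assms(2) by (simp add: no_isolated_vertices_complete_graph)
  then obtain G' where "ramsey_minimal (r - 1) ?K G'" "min_degree G' \<le> degree G v"
    using ramsey_minimal_degree_step[OF G(1) _ v(1)] by blast
  then show ?thesis using s_r_le_min_degree[of "r - 1" ?K G'] G(2) v(2) by linarith
qed

end
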